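(* Let $\mathcal J\subseteq\mathbb R$ be an open interval, $\phi:\mathcal J\to\mathbb R$ three times continuously differentiable with $\phi''>0$, $K\ge1$, $\mathcal M=\mathcal J^K$, $h$ a primitive of $\sqrt{\phi''}$ with inverse $H=h^{-1}$ on $h(\mathcal J)$ (both applied componentwise to vectors), and $d_\phi(\boldsymbol x,\boldsymbol y)^2=\sum_{j=1}^K(h(x_j)-h(y_j))^2$. Let $P$ be a Borel probability measure on $\mathcal M$, $\boldsymbol X$ the identity map on $\mathcal M$, and assume $E[\|h(\boldsymbol X)\|^2]<\infty$. Let $\mathcal C=\{\boldsymbol y_1,\dots,\boldsymbol y_N\}\subset\mathcal M$ be a codebook of distinct points, let $S_i=\{\boldsymbol x\in\mathcal M: d_\phi(\boldsymbol x,\boldsymbol y_i)\le d_\phi(\boldsymbol x,\boldsymbol y_j)\ \forall j\}$ be the $d_\phi$-Voronoi cells, $B_i=\mathrm{int}(S_i)$, and assume $P(S_i\cap S_j)=0$ for $i\neq j$ and $P(S_i)>0$ for all $i$. Define $$\boldsymbol y_i^*=\frac{1}{P(S_i)}E_\phi[\boldsymbol X;S_i]:=H\Big(\frac{1}{P(S_i)}E[h(\boldsymbol X)\mathbf 1_{S_i}(\boldsymbol X)]\Big).$$ Then for all $i=1,\dots,N$, $$\boldsymbol y_i^*=\frac{1}{P(B_i)}E_\phi[\boldsymbol X;B_i]\in B_i\subset S_i,$$ where analogously $\frac{1}{P(B_i)}E_\phi[\boldsymbol X;B_i]=H\big(\frac{1}{P(B_i)}E[h(\boldsymbol X)\mathbf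 1_{B_i}(\boldsymbol X)]\big)$.
   Context: $\boldsymbol y_i^*$ is the $d_\phi$-centroid (the minimizer of $E[d_\phi(\boldsymbol X,\boldsymbol\xi)^2\mid \boldsymbol X\in S_i]$) of the cell $S_i$; the quantizer $q^*(\boldsymbol X)=\sum_i \boldsymbol y_i^*\mathbf 1_{S_i}(\boldsymbol X)$ minimizes the distortion $E[d_\phi(\boldsymbol X,q(\boldsymbol X))^2]$ among quantizers with the partition $\{S_i\}$. *)

theory Defs
  imports "HOL-Probability.Probability"
begin

definition vmap :: "(real \<Rightarrow> real) \<Rightarrow> real^'k \<Rightarrow> real^'k" where
  "vmap f x = (\<chi> j. f (x $ j))"

definition cube :: "real set \<Rightarrow> (real^'k) set" where
  "cube J = {x. \<forall>j. x $ j \<in> J}"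

definition dphi :: "(real \<Rightarrow> real) \<Rightarrow> real^'k \<Rightarrow> real^'k \<Rightarrow> real" where
  "dphi h x y = sqrt (\<Sum>j\<in>UNIV. (h (x $ j) - h (y $ j))^2)"

definition voronoi_cell ::
  "(real \<Rightarrow> real) \<Rightarrow> real set \<Rightarrow> (nat \<Rightarrow> real^'k) \<Rightarrow> nat \<Rightarrow> nat \<Rightarrow> (real^'k) set" where
  "voronoi_cell h J y N i = {x \<in> cube J. \<forall>j<N. dphi h x (y i) \<le> dphi h x (y j)}"

definition phi_centroid ::
  "(real^'k) measure \<Rightarrow> (real \<Rightarrow> real) \<Rightarrow> real set \<Rightarrow> (real^'k) set \<Rightarrow> real^'k" where
  "phi_centroid P h J A =
     vmap (the_inv_into J h) ((1 / measure P A) *\<^sub>R (LINT x:A|P. vmap h x))"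

end

theory Submission
  imports Defs
begin

text \<open>
  The points strictly closer to \<open>y i\<close> than to every other codebook point form an open set
  \<open>T \<subseteq> B\<^sub>i \<subseteq> S\<^sub>i\<close>, and \<open>S\<^sub>i - T\<close> is covered by the null overlaps \<open>S\<^sub>i \<inter> S\<^sub>j\<close>; so the
  three sets have the same \<open>\<phi>\<close>-centroid. In the coordinates \<open>vmap h\<close> the distance \<open>dphi\<close> is
  Euclidean, hence \<open>T\<close> is the preimage of an intersection of open half-spaces, while \<open>h ` J\<close> is
  an interval. Averaging \<open>vmap h\<close> over \<open>T\<close>, which has positive mass, stays inside both, so its
  image under \<open>H\<close> lies in \<open>T\<close>.
\<close>

definition set_average :: "'a measure \<Rightarrow> 'a set \<Rightarrow> ('a \<Rightarrow> 'b::euclidean_space) \<Rightarrow> 'b" where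
  "set_average M A u = (1 / measure M A) *\<^sub>R (LINT x:A|M. u x)"

lemma (in finite_measure) inner_set_average_less:
  fixes u :: "'a \<Rightarrow> 'b::euclidean_space"
  assumes A: "A \<in> sets M" "measure M A > 0" and u: "set_integrable M A u"
    and less: "\<And>x. x \<in> A \<Longrightarrow> c \<bullet> u x < d"
  shows "c \<bullet> set_average M A u < d"
proof -
  have "(\<integral>x. indicator A x * (c \<bullet> u x) \<partial>M) < (\<integral>x. indicator A x * d \<partial>M)"
  proof (rule integral_less_AE[where A = A])
    show "integrable M (\<lambda>x. indicator A x * (c \<bullet> u x))"
      using integrable_inner_right[OF u[unfolded set_integrable_def], of c]
      by (simp add: inner_scaleR_right)
    show "integrable M (\<lambda>x. indicator A x * d)"
      using A(1) by (intro integrable_mult_left integrable_real_indicator) (auto simp: less_top[symmetric])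
  qed (use A less in \<open>auto simp: emeasure_eq_measure indicator_def less_imp_le\<close>)
  also have "(\<integral>x. indicator A x * d \<partial>M) = measure M A * d"
    using A(1) by (simp add: Int_absorb2 sets.sets_into_space)
  also have "(\<integral>x. indicator A x * (c \<bullet> u x) \<partial>M) = c \<bullet> (LINT x:A|M. u x)"
    using u unfolding set_lebesgue_integral_def set_integrable_def
    by (simp add: inner_scaleR_right[symmetric] del: inner_scaleR_right)
  finally show ?thesis
    using A(2) by (simp add: set_average_def field_simps)
qed

lemma (in finite_measure) inner_set_average_in_interval:
  fixes u :: "'a \<Rightarrow> 'b::euclidean_space"
  assumes A: "A \<in> sets M" "measure M A > 0" and u: "set_integrable M A u"
    and I: "is_interval I" and in_I: "\<And>x. x \<in> A \<Longrightarrow> b \<bullet> u x \<in> I"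
  shows "b \<bullet> set_average M A u \<in> I"
proof (rule ccontr)
  let ?m = "b \<bullet> set_average M A u"
  assume "?m \<notin> I"
  obtain x0 where "x0 \<in> A"
    using A(2) by force
  with \<open>?m \<notin> I\<close> in_I consider "?m < b \<bullet> u x0" | "b \<bullet> u x0 < ?m"
    by (metis linorder_neqE)
  then show False
  proof cases
    case 1
    have "?m < b \<bullet> u x" if "x \<in> A" for x
      using I \<open>?m \<notin> I\<close> in_I[OF that] in_I[OF \<open>x0 \<in> A\<close>] 1
      unfolding is_interval_1 by (meson not_less less_imp_le)
    then have "(- b) \<bullet> set_average M A u < - ?m"
      by (intro inner_set_average_less[OF A u]) simp
    then show False by simp
  next
    case 2
    have "b \<bullet> u x < ?m" if "x \<in> A" for x
      using I \<open>?m \<notin> I\<close> in_I[OF that] in_I[OF \<open>x0 \<in> A\<close>] 2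
      unfolding is_interval_1 by (meson not_less less_imp_le)
    then have "b \<bullet> set_average M A u < ?m"
      by (intro inner_set_average_less[OF A u])
    then show False by simp
  qed
qed

lemma dist_less_dist_iff_inner_less:
  fixes v a b :: "'a::real_inner"
  shows "dist v a < dist v b \<longleftrightarrow> (2 *\<^sub>R (b - a)) \<bullet> v < (norm b)\<^sup>2 - (norm a)\<^sup>2"
proof -
  have "dist v a < dist v b \<longleftrightarrow> (dist v a)\<^sup>2 < (dist v b)\<^sup>2"
    by (meson pos2 power_less_imp_less_base power_strict_mono zero_le_dist)
  moreover have "(dist v c)\<^sup>2 = (norm v)\<^sup>2 - 2 * (c \<bullet> v) + (norm c)\<^sup>2" for c
    by (simp add: dist_norm power2_norm_eq_inner inner_diff inner_commute)
  ultimately show ?thesis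
    by (simp add: inner_diff_left, linarith)
qed

lemma (in finite_measure) set_average_dist_less:
  fixes u :: "'a \<Rightarrow> 'b::euclidean_space"
  assumes A: "A \<in> sets M" "measure M A > 0" and u: "set_integrable M A u"
    and less: "\<And>x. x \<in> A \<Longrightarrow> dist (u x) a < dist (u x) b"
  shows "dist (set_average M A u) a < dist (set_average M A u) b"
  using less unfolding dist_less_dist_iff_inner_less by (rule inner_set_average_less[OF A u])

lemma set_average_cong_AE:
  fixes u :: "'a \<Rightarrow> 'b::euclidean_space"
  assumes A: "A \<in> sets M" and B: "B \<in> sets M" and u: "u \<in> borel_measurable M"
    and AE: "AE x in M. x \<in> A \<longleftrightarrow> x \<in> B"
  shows "set_average M A u = set_average M B u"
proof -
  have "set_borel_measurable M A u" "set_borel_measurable M B u"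
    using A B u by (auto simp: set_borel_measurable_def)
  then have "(LINT x:A|M. u x) = (LINT x:B|M. u x)"
    using AE by (rule set_integral_cong_set[THEN sym])
  then show ?thesis
    unfolding set_average_def measure_eq_AE[OF AE A B] by simp
qed

lemma DERIV_pos_imp_strict_mono_on:
  fixes h :: "real \<Rightarrow> real"
  assumes J: "is_interval J"
    and deriv: "\<And>t. t \<in> J \<Longrightarrow> (h has_real_derivative h' t) (at t)"
    and pos: "\<And>t. t \<in> J \<Longrightarrow> h' t > 0"
  shows "strict_mono_on J h"
proof (rule strict_mono_onI)
  fix a b assume ab: "a \<in> J" "b \<in> J" "a < b"
  show "h a < h b"
  proof (rule DERIV_pos_imp_increasing[OF \<open>a < b\<close>])
    fix t assume "a \<le> t" "t \<le> b"
    with J ab have "t \<in> J"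
      unfolding is_interval_1 by blast
    with deriv pos show "\<exists>y. (h has_real_derivative y) (at t) \<and> y > 0"
      by blast
  qed
qed

lemma vmap_the_inv_into_in_cube:
  "inj_on h J \<Longrightarrow> (\<And>k. m $ k \<in> h ` J) \<Longrightarrow> vmap (the_inv_into J h) m \<in> cube J"
  by (simp add: vmap_def cube_def the_inv_into_into)

lemma vmap_vmap_the_inv_into:
  "inj_on h J \<Longrightarrow> (\<And>k. m $ k \<in> h ` J) \<Longrightarrow> vmap h (vmap (the_inv_into J h) m) = m"
  by (simp add: vmap_def vec_eq_iff f_the_inv_into_f)

lemma continuous_on_vmap:
  assumes "continuous_on J h"
  shows "continuous_on (cube J) (vmap h)"
proof -
  have "continuous_on (cube J) (\<lambda>x. h (x $ k))" for k
    by (rule continuous_on_compose2[OF assms]) (auto simp: cube_def intro!: continuous_intros)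
  then show ?thesis
    unfolding vmap_def by (rule continuous_on_vec_lambda)
qed

lemma open_cube: "open J \<Longrightarrow> open (cube J :: (real^'k) set)"
proof -
  assume "open J"
  moreover have "cube J = (\<Inter>k. (\<lambda>x::real^'k. x $ k) -` J)"
    unfolding cube_def by auto
  ultimately show ?thesis
    by (simp add: open_INT open_vimage_vec_nth)
qed

lemma dphi_eq_dist: "dphi h x y = dist (vmap h x) (vmap h y)"
  unfolding dphi_def dist_vec_def vmap_def L2_set_def dist_real_def by simp

definition strict_voronoi_cell ::
  "(real \<Rightarrow> real) \<Rightarrow> real set \<Rightarrow> (nat \<Rightarrow> real^'k) \<Rightarrow> nat \<Rightarrow> nat \<Rightarrow> (real^'k) set" where
  "strict_voronoi_cell h J y N i =
     {x \<in> cube J. \<forall>j<N. j \<noteq> i \<longrightarrow> dphi h x (y i) < dphi h x (y j)}"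

lemma voronoi_cell_eq_vimage:
  "voronoi_cell h J y N i =
     cube J \<inter> vmap h -` {v. \<forall>j<N. dist v (vmap h (y i)) \<le> dist v (vmap h (y j))}"
  by (auto simp: voronoi_cell_def dphi_eq_dist)

lemma strict_voronoi_cell_eq_vimage:
  "strict_voronoi_cell h J y N i =
     cube J \<inter> vmap h -` {v. \<forall>j<N. j \<noteq> i \<longrightarrow> dist v (vmap h (y i)) < dist v (vmap h (y j))}"
  by (auto simp: strict_voronoi_cell_def dphi_eq_dist)

lemma strict_voronoi_cell_subset: "strict_voronoi_cell h J y N i \<subseteq> voronoi_cell h J y N i"
  by (auto simp: strict_voronoi_cell_def voronoi_cell_def less_imp_le)

lemma open_strict_voronoi_cell:
  assumes "open J" and "continuous_on J h"
  shows "open (strict_voronoi_cell h J y N i)"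
proof -
  let ?c = "\<lambda>j. vmap h (y j)"
  have eq: "{v. \<forall>j<N. j \<noteq> i \<longrightarrow> dist v (?c i) < dist v (?c j)} =
      (\<Inter>j\<in>{..<N} - {i}. {v. dist v (?c i) < dist v (?c j)})"
    by auto
  have "open {v. dist v (?c i) < dist v (?c j)}" for j
    by (intro open_Collect_less continuous_intros)
  then have "open {v. \<forall>j<N. j \<noteq> i \<longrightarrow> dist v (?c i) < dist v (?c j)}"
    unfolding eq by (intro open_INT) auto
  then show ?thesis
    unfolding strict_voronoi_cell_eq_vimage
    by (rule continuous_open_preimage[OF continuous_on_vmap[OF assms(2)] open_cube[OF assms(1)]])
qed

lemma open_in_sets_restrict_borel:
  assumes "sets M = sets (restrict_space borel \<Omega>)" and "open B" and "B \<subseteq> \<Omega>"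
  shows "B \<in> sets M"
proof -
  have "\<Omega> \<inter> B \<in> (\<inter>) \<Omega> ` sets borel"
    using borel_open[OF assms(2)] by (rule imageI)
  moreover have "\<Omega> \<inter> B = B"
    using assms(3) by blast
  ultimately show ?thesis
    unfolding assms(1) sets_restrict_space by simp
qed

lemma borel_measurable_vmap:
  assumes "sets M = sets (restrict_space borel (cube J))" and "continuous_on J h"
  shows "vmap h \<in> borel_measurable M"
  using borel_measurable_continuous_on_restrict[OF continuous_on_vmap[OF assms(2)]]
  by (subst measurable_cong_sets[OF assms(1) refl])

lemma voronoi_cell_in_sets:
  assumes "sets M = sets (restrict_space borel (cube J))" and "continuous_on J h"
  shows "voronoi_cell h J y N i \<in> sets M"
proof -
  let ?C = "{v. \<forall>j<N. dist v (vmap h (y i)) \<le> dist v (vmap h (y j))}"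
  have "closed ?C"
    by (intro closed_Collect_all closed_Collect_imp closed_Collect_le continuous_intros) auto
  then have "vmap h -` ?C \<inter> space M \<in> sets M"
    by (intro measurable_sets[OF borel_measurable_vmap[OF assms]] borel_closed)
  moreover have "space M = cube J"
    using sets_eq_imp_space_eq[OF assms(1)] by (simp add: space_restrict_space)
  ultimately show ?thesis
    unfolding voronoi_cell_eq_vimage by (simp add: Int_commute)
qed

lemma AE_voronoi_cell_imp_strict:
  assumes "finite_measure M"
    and sets: "\<And>j. voronoi_cell h J y N j \<in> sets M"
    and null: "\<And>j. j < N \<Longrightarrow> j \<noteq> i \<Longrightarrow>
      measure M (voronoi_cell h J y N i \<inter> voronoi_cell h J y N j) = 0"
  shows "AE x in M. x \<in> voronoi_cell h J y N i \<longrightarrow> x \<in> strict_voronoi_cell h J y N i"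
proof -
  let ?S = "voronoi_cell h J y N"
  let ?U = "\<Union>j\<in>{..<N} - {i}. ?S i \<inter> ?S j"
  have "?U \<in> null_sets M"
    using sets null by (intro null_sets_UN') (auto simp: finite_measure.emeasure_eq_measure[OF assms(1)])
  then have "AE x in M. x \<notin> ?U"
    by (rule AE_not_in)
  moreover have "x \<in> ?S i \<longrightarrow> x \<in> strict_voronoi_cell h J y N i" if "x \<notin> ?U" for x
  proof
    assume "x \<in> ?S i"
    have "dphi h x (y i) < dphi h x (y j)" if j: "j < N" "j \<noteq> i" for j
    proof (rule ccontr)
      assume "\<not> ?thesis"
      with \<open>x \<in> ?S i\<close> j have "x \<in> ?S j"
        by (force simp: voronoi_cell_def)
      with \<open>x \<in> ?S i\<close> \<open>x \<notin> ?U\<close> j show False by blast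
    qed
    with \<open>x \<in> ?S i\<close> show "x \<in> strict_voronoi_cell h J y N i"
      by (simp add: voronoi_cell_def strict_voronoi_cell_def)
  qed
  ultimately show ?thesis
    by (rule eventually_mono)
qed

lemma set_average_vmap_in_image:
  assumes M: "finite_measure M"
    and A: "A \<in> sets M" "measure M A > 0" and u: "set_integrable M A (vmap h)"
    and sub: "A \<subseteq> cube J" and hJ: "is_interval (h ` J)"
  shows "set_average M A (vmap h) $ k \<in> h ` J"
proof -
  have axis: "axis k 1 \<bullet> v = v $ k" for v
    by (simp add: inner_axis')
  have "axis k 1 \<bullet> vmap h x \<in> h ` J" if "x \<in> A" for x
    using sub that by (auto simp: axis vmap_def cube_def)
  then have "axis k 1 \<bullet> set_average M A (vmap h) \<in> h ` J"
    by (rule finite_measure.inner_set_average_in_interval[OF M A u hJ])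
  then show ?thesis
    by (simp only: axis)
qed

lemma phi_centroid_eq_set_average:
  "phi_centroid M h J A = vmap (the_inv_into J h) (set_average M A (vmap h))"
  unfolding phi_centroid_def set_average_def ..

lemma phi_centroid_cong_AE:
  assumes "A \<in> sets M" and "B \<in> sets M" and "vmap h \<in> borel_measurable M"
    and "AE x in M. x \<in> A \<longleftrightarrow> x \<in> B"
  shows "phi_centroid M h J A = phi_centroid M h J B"
  unfolding phi_centroid_eq_set_average set_average_cong_AE[OF assms] ..

lemma phi_centroid_in_strict_voronoi_cell:
  assumes M: "finite_measure M"
    and A: "A \<in> sets M" "measure M A > 0" and u: "set_integrable M A (vmap h)"
    and sub: "A \<subseteq> strict_voronoi_cell h J y N i"
    and inj: "inj_on h J" and hJ: "is_interval (h ` J)"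
  shows "phi_centroid M h J A \<in> strict_voronoi_cell h J y N i"
proof -
  let ?m = "set_average M A (vmap h)"
  have m: "?m $ k \<in> h ` J" for k
    using sub by (intro set_average_vmap_in_image[OF M A u _ hJ]) (auto simp: strict_voronoi_cell_def)
  have "dist ?m (vmap h (y i)) < dist ?m (vmap h (y j))" if "j < N" "j \<noteq> i" for j
    using sub that by (intro finite_measure.set_average_dist_less[OF M A u]) (auto simp: strict_voronoi_cell_eq_vimage)
  then show ?thesis
    unfolding phi_centroid_eq_set_average strict_voronoi_cell_eq_vimage
    using vmap_the_inv_into_in_cube[OF inj m] vmap_vmap_the_inv_into[OF inj m] by simp
qed

lemma phi_centroid_voronoi_cell:
  assumes M: "finite_measure M" and M_sets: "sets M = sets (restrict_space borel (cube J))"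
    and J: "open J" and h_cont: "continuous_on J h" and h_inj: "inj_on h J"
    and hJ: "is_interval (h ` J)" and h_int: "integrable M (vmap h)"
    and null: "\<And>j. j < N \<Longrightarrow> j \<noteq> i \<Longrightarrow>
      measure M (voronoi_cell h J y N i \<inter> voronoi_cell h J y N j) = 0"
    and pos: "measure M (voronoi_cell h J y N i) > 0"
  shows "phi_centroid M h J (voronoi_cell h J y N i)
      = phi_centroid M h J (interior (voronoi_cell h J y N i))"
    and "phi_centroid M h J (voronoi_cell h J y N i) \<in> interior (voronoi_cell h J y N i)"
proof -
  let ?S = "voronoi_cell h J y N" and ?T = "strict_voronoi_cell h J y N i"
  have h_meas: "vmap h \<in> borel_measurable M"
    by (rule borel_measurable_vmap[OF M_sets h_cont])
  have T_open: "open ?T"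
    by (rule open_strict_voronoi_cell[OF J h_cont])
  have T_sub: "?T \<subseteq> interior (?S i)"
    using strict_voronoi_cell_subset T_open by (rule interior_maximal)
  have S_sets: "?S j \<in> sets M" for j
    by (rule voronoi_cell_in_sets[OF M_sets h_cont])
  have T_sets: "?T \<in> sets M" and I_sets: "interior (?S i) \<in> sets M"
    using T_open T_sub interior_subset[of "?S i"]
    by (auto intro!: open_in_sets_restrict_borel[OF M_sets] simp: voronoi_cell_def)
  have "AE x in M. x \<in> ?S i \<longrightarrow> x \<in> ?T"
    using S_sets null by (rule AE_voronoi_cell_imp_strict[OF M])
  then have AE_S: "AE x in M. x \<in> ?S i \<longleftrightarrow> x \<in> ?T"
    and AE_I: "AE x in M. x \<in> interior (?S i) \<longleftrightarrow> x \<in> ?T"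
    using T_sub interior_subset[of "?S i"] by (auto elim!: eventually_mono)
  have "measure M ?T > 0"
    using pos measure_eq_AE[OF AE_S S_sets T_sets] by simp
  moreover have "set_integrable M ?T (vmap h)"
    unfolding set_integrable_def by (rule integrable_mult_indicator[OF T_sets h_int])
  ultimately have "phi_centroid M h J ?T \<in> ?T"
    by (intro phi_centroid_in_strict_voronoi_cell[OF M T_sets _ _ order_refl h_inj hJ])
  moreover have "phi_centroid M h J (?S i) = phi_centroid M h J ?T"
    by (rule phi_centroid_cong_AE[OF S_sets T_sets h_meas AE_S])
  moreover have "phi_centroid M h J (interior (?S i)) = phi_centroid M h J ?T"
    by (rule phi_centroid_cong_AE[OF I_sets T_sets h_meas AE_I])
  ultimately show "phi_centroid M h J (?S i) = phi_centroid M h J (interior (?S i))"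
    and "phi_centroid M h J (?S i) \<in> interior (?S i)"
    using T_sub by auto
qed

theorem corollary1:
  fixes J :: "real set"
    and phi phi1 phi2 phi3 h :: "real \<Rightarrow> real"
    and P :: "(real^'k) measure"
    and y :: "nat \<Rightarrow> real^'k"
    and N :: nat
  assumes J_open: "open J" and J_interval: "is_interval J" and J_ne: "J \<noteq> {}"
    and phi1: "\<And>t. t \<in> J \<Longrightarrow> (phi has_real_derivative phi1 t) (at t)"
    and phi2: "\<And>t. t \<in> J \<Longrightarrow> (phi1 has_real_derivative phi2 t) (at t)"
    and phi3: "\<And>t. t \<in> J \<Longrightarrow> (phi2 has_real_derivative phi3 t) (at t)"
    and phi3_cont: "continuous_on J phi3"
    and phi2_pos: "\<And>t. t \<in> J \<Longrightarrow> phi2 t > 0"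
    and h_prim: "\<And>t. t \<in> J \<Longrightarrow> (h has_real_derivative sqrt (phi2 t)) (at t)"
    and P_prob: "prob_space P"
    and P_sets: "sets P = sets (restrict_space borel (cube J))"
    and P_moment: "integrable P (\<lambda>x. (norm (vmap h x))^2)"
    and y_in: "\<And>i. i < N \<Longrightarrow> y i \<in> cube J"
    and y_inj: "inj_on y {..<N}"
    and cells_null: "\<And>i j. i < N \<Longrightarrow> j < N \<Longrightarrow> i \<noteq> j \<Longrightarrow>
        measure P (voronoi_cell h J y N i \<inter> voronoi_cell h J y N j) = 0"
    and cells_pos: "\<And>i. i < N \<Longrightarrow> measure P (voronoi_cell h J y N i) > 0"
  shows "\<forall>i<N.
      phi_centroid P h J (voronoi_cell h J y N i)
        = phi_centroid P h J (interior (voronoi_cell h J y N i))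
    \<and> phi_centroid P h J (voronoi_cell h J y N i) \<in> interior (voronoi_cell h J y N i)
    \<and> interior (voronoi_cell h J y N i) \<subseteq> voronoi_cell h J y N i"
proof (intro allI impI)
  fix i assume "i < N"
  interpret P: prob_space P by (rule P_prob)
  have h_cont: "continuous_on J h"
    using h_prim by (meson DERIV_isCont continuous_at_imp_continuous_on)
  have "sqrt (phi2 t) > 0" if "t \<in> J" for t
    using phi2_pos[OF that] by simp
  with J_interval h_prim have "strict_mono_on J h"
    by (rule DERIV_pos_imp_strict_mono_on)
  then have h_inj: "inj_on h J"
    by (rule strict_mono_on_imp_inj_on)
  have hJ: "is_interval (h ` J)"
    using J_interval h_cont by (simp add: is_interval_connected_1 connected_continuous_image)
  have h_int: "integrable P (vmap h)"
    using P.square_integrable_imp_integrable[of "\<lambda>x. norm (vmap h x)"] P_moment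
      borel_measurable_vmap[OF P_sets h_cont]
    by (simp add: integrable_norm_iff)
  note cell = phi_centroid_voronoi_cell[OF P.finite_measure_axioms P_sets J_open h_cont h_inj hJ h_int
      cells_null[OF \<open>i < N\<close>] cells_pos[OF \<open>i < N\<close>]]
  show "phi_centroid P h J (voronoi_cell h J y N i)
        = phi_centroid P h J (interior (voronoi_cell h J y N i))
    \<and> phi_centroid P h J (voronoi_cell h J y N i) \<in> interior (voronoi_cell h J y N i)
    \<and> interior (voronoi_cell h J y N i) \<subseteq> voronoi_cell h J y N i"
    using cell interior_subset by blast
qed

end
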